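(* Let $1<\beta<2$, $N\ge5$, $h=(b-a)/N$, let $\gamma\in\mathbb R$ and $D_+,D_-\ge0$ with $D_++D_->0$. Then there is a constant $c>0$ independent of $h$ (one may take $c=c_1(D_++D_-)$ with $c_1$ independent of $h$) such that for every $\bm v\in V_h$ \[ (\delta^{\beta}_h\bm v,\bm v)\le -c\ln 2\,\|\bm v\|^2 . \]
   Context: Let $a<b$, $N$ a positive integer, $h=(b-a)/N$, grid $x_i=a+ih$. $V_h$ is the space of real grid functions $\bm v=(v_0,\dots,v_N)$ with $v_0=v_N=0$; $(\bm u,\bm v)=h\sum_{i=1}^{N-1}u_iv_i$, $\|\bm u\|=\sqrt{(\bm u,\bm u)}$. For $1<\beta<2$: $g^{(\beta)}_k=(-1)^k\binom{\beta}{k}$, $\lambda_1=\frac{\beta^2+3\beta+2}{12}$, $\lambda_0=\frac{4-\beta^2}{6}$, $\lambda_{-1}=\frac{\beta^2-3\beta+2}{12}$, $\omega^{(\beta)}_0=\lambda_1g^{(\beta)}_0$, $\omega^{(\beta)}_1=\lambda_1g^{(\beta)}_1+\lambda_0g^{(\beta)}_0$, $\omega^{(\beta)}_k=\lambda_1g^{(\beta)}_k+\lambda_0g^{(\beta)}_{k-1}+\lambda_{-1}g^{(\beta)}_{k-2}$ ($k\ge2$). For $\bm v\in V_h$, $1\le i\le N-1$: $(\delta^\beta_h\bm v)_i=\gamma\frac{v_{i+1}-v_{i-1}}{2h}+\frac{D_+}{h^\beta}\sum_{k=0}^{i+1}\omega^{(\beta)}_kv_{i-k+1}+\frac{D_-}{h^\beta}\sum_{k=0}^{N-i+1}\omega^{(\beta)}_kv_{i+k-1}$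 (entries with index $0$ or $N$ are zero), and $(\delta^\beta_h\bm v,\bm v)=h\sum_{i=1}^{N-1}(\delta^\beta_h\bm v)_iv_i$. *)

theory Defs
  imports Complex_Main
begin

definition gw :: "real \<Rightarrow> nat \<Rightarrow> real" where
  "gw \<beta> k = (-1) ^ k * (\<beta> gchoose k)"

definition lam1 :: "real \<Rightarrow> real" where "lam1 \<beta> = (\<beta>^2 + 3*\<beta> + 2) / 12"
definition lam0 :: "real \<Rightarrow> real" where "lam0 \<beta> = (4 - \<beta>^2) / 6"
definition lamm1 :: "real \<Rightarrow> real" where "lamm1 \<beta> = (\<beta>^2 - 3*\<beta> + 2) / 12"

definition omega :: "real \<Rightarrow> nat \<Rightarrow> real" where
  "omega \<beta> k =
     (if k = 0 then lam1 \<beta> * gw \<beta> 0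
      else if k = 1 then lam1 \<beta> * gw \<beta> 1 + lam0 \<beta> * gw \<beta> 0
      else lam1 \<beta> * gw \<beta> k + lam0 \<beta> * gw \<beta> (k - 1) + lamm1 \<beta> * gw \<beta> (k - 2))"

definition mesh :: "real \<Rightarrow> real \<Rightarrow> nat \<Rightarrow> real" where
  "mesh a b N = (b - a) / real N"

(* grid functions are nat \<Rightarrow> real; V_h = those with v 0 = 0 and v N = 0 (only v 0..v N matter) *)
definition in_Vh :: "nat \<Rightarrow> (nat \<Rightarrow> real) \<Rightarrow> bool" where
  "in_Vh N v \<longleftrightarrow> v 0 = 0 \<and> v N = 0"

definition grid_ip :: "real \<Rightarrow> real \<Rightarrow> nat \<Rightarrow> (nat \<Rightarrow> real) \<Rightarrow> (nat \<Rightarrow> real) \<Rightarrow> real" where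
  "grid_ip a b N u v = mesh a b N * (\<Sum>i = 1..N - 1. u i * v i)"

definition grid_norm :: "real \<Rightarrow> real \<Rightarrow> nat \<Rightarrow> (nat \<Rightarrow> real) \<Rightarrow> real" where
  "grid_norm a b N v = sqrt (grid_ip a b N v v)"

(* (\<delta>^\<beta>_h v)_i for 1 \<le> i \<le> N-1 *)
definition delta_h :: "real \<Rightarrow> real \<Rightarrow> real \<Rightarrow> real \<Rightarrow> real \<Rightarrow> real \<Rightarrow> nat \<Rightarrow> (nat \<Rightarrow> real) \<Rightarrow> nat \<Rightarrow> real" where
  "delta_h \<beta> \<gamma> Dp Dm a b N v i =
     (let h = mesh a b N in
      \<gamma> * (v (i + 1) - v (i - 1)) / (2 * h)
      + Dp / h powr \<beta> * (\<Sum>k = 0..i + 1. omega \<beta> k * v (i + 1 - k))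
      + Dm / h powr \<beta> * (\<Sum>k = 0..N - i + 1. omega \<beta> k * v (i + k - 1)))"

end

theory Submission
  imports Defs "HOL-Analysis.Convex"
begin

text \<open>
  The convection term is a central difference and drops out of \<open>(\<delta> v, v)\<close> by summation
  by parts. The two fractional sums are the entries of \<open>W v\<close> and \<open>W\<^sup>T v\<close> for the Toeplitz
  matrix \<open>W i j = \<omega> (i + 1 - j)\<close>, so the fractional part of \<open>(\<delta> v, v)\<close> is
  \<open>(D\<^sub>+ + D\<^sub>-) h\<^sup>1\<^sup>-\<^sup>\<beta> v\<^sup>T W v\<close>. Since \<open>\<omega> 0 + \<omega> 2 \<ge> 0\<close> and \<open>\<omega> k \<ge> 0\<close> for \<open>k \<ge> 3\<close>, the
  symmetric part of \<open>W\<close> has nonnegative off-diagonal entries, and \<open>v\<^sup>T W v\<close> is bounded by half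
  the sum of \<open>(v i)\<^sup>2\<close> times the \<open>i\<close>-th row plus column sum of \<open>W\<close>. These are partial sums of
  \<open>\<omega>\<close> (up to the nonpositive \<open>\<omega> 1\<close>). Because the partial sums of the Gruenwald weights of
  order \<open>\<beta>\<close> are the weights of order \<open>\<beta> - 1\<close>, which are negative and of exact size \<open>n\<^sup>-\<^sup>\<beta>\<close>,
  one gets \<open>\<Sum>k\<le>m. \<omega> k \<le> -\<kappa> m\<^sup>-\<^sup>\<beta>\<close>; with \<open>N h = b - a\<close> this gives
  \<open>(\<delta> v, v) \<le> -(D\<^sub>+ + D\<^sub>-) \<kappa> / (2 (b - a)\<^sup>\<beta>) \<parallel>v\<parallel>\<^sup>2\<close>.
\<close>

lemma pred_powr_le:
  assumes "0 < \<alpha>" "\<alpha> < 1" "2 \<le> n"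
  shows "(real n - 1) powr (1 + \<alpha>) \<le> real n powr (1 + \<alpha>) * (real n - \<alpha>) / (real n + 1)"
proof -
  define x where "x = (real n - 1) / real n"
  have n: "2 \<le> real n" using assms(3) by simp
  then have x: "0 < x" by (simp add: x_def)
  have "x powr \<alpha> * 1 powr (1 - \<alpha>) \<le> \<alpha> * x + (1 - \<alpha>) * 1"
    by (rule Youngs_inequality_0) (use assms x in auto)
  then have "x powr (1 + \<alpha>) \<le> x * (\<alpha> * x + (1 - \<alpha>))"
    using x by (simp add: powr_add mult_left_mono)
  also have "\<dots> = (real n - 1) * (real n - \<alpha>) / (real n)^2"
    using n by (simp add: x_def field_simps power2_eq_square)
  also have "\<dots> \<le> (real n - \<alpha>) / (real n + 1)"
  proof -
    have "(real n - 1) * (real n + 1) \<le> (real n)^2"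
      by (simp add: power2_eq_square algebra_simps)
    then have "(real n - 1) * (real n + 1) * (real n - \<alpha>) \<le> (real n)^2 * (real n - \<alpha>)"
      using assms n by (intro mult_right_mono) auto
    then show ?thesis
      using n by (simp add: field_simps)
  qed
  finally have x_bound: "x powr (1 + \<alpha>) \<le> (real n - \<alpha>) / (real n + 1)" .
  have "(real n - 1) powr (1 + \<alpha>) = x powr (1 + \<alpha>) * real n powr (1 + \<alpha>)"
    using n by (simp add: x_def powr_divide)
  also have "\<dots> \<le> (real n - \<alpha>) / (real n + 1) * real n powr (1 + \<alpha>)"
    using x_bound by (rule mult_right_mono) simp
  finally show ?thesis
    by (simp add: mult_ac)
qed

lemma sq_cube_bounds:
  fixes \<beta> :: real
  assumes "1 < \<beta>" "\<beta> < 2"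
  shows "1 < \<beta>^2" "\<beta>^2 < 4" "1 < \<beta>^3" "\<beta>^3 < 8"
  using assms power_strict_mono[of 1 \<beta>] power_strict_mono[of \<beta> 2 2] power_strict_mono[of \<beta> 2 3]
  by simp_all

lemma sum_interior:
  fixes v :: "nat \<Rightarrow> real"
  assumes "v 0 = 0" "v N = 0"
  shows "(\<Sum>j=0..N. g j * v j) = (\<Sum>j=1..N-1. g j * v j)"
proof (rule sum.mono_neutral_right)
  show "\<forall>j\<in>{0..N} - {1..N-1}. g j * v j = 0"
  proof
    fix j
    assume "j \<in> {0..N} - {1..N-1}"
    then have "j = 0 \<or> j = N"
      by auto
    then show "g j * v j = 0"
      using assms by auto
  qed
qed auto

lemma sum_central_difference_eq_0:
  fixes v :: "nat \<Rightarrow> real"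
  assumes "v 0 = 0" "v N = 0"
  shows "(\<Sum>i=1..N-1. (v (i + 1) - v (i - 1)) * v i) = 0"
proof (cases N)
  case 0
  then show ?thesis by simp
next
  case (Suc M)
  have "(\<Sum>i=1..M. v (i + 1) * v i) = (\<Sum>i=0..M. v i * v (i + 1))"
    using assms(1) by (simp add: sum.atLeast_Suc_atMost[of 0 M] mult.commute)
  also have "\<dots> = (\<Sum>i=Suc 0..Suc M. v (i - 1) * v i)"
    by (simp only: sum.atLeast_Suc_atMost_Suc_shift) simp
  also have "\<dots> = (\<Sum>i=1..M. v (i - 1) * v i)"
    using assms(2) Suc by simp
  finally show ?thesis
    using Suc by (simp add: left_diff_distrib sum_subtractf)
qed

lemma quadratic_form_le_row_col_sums:
  fixes w :: "'a \<Rightarrow> 'a \<Rightarrow> real" and v :: "'a \<Rightarrow> real"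
  assumes "finite I" "\<And>i j. i \<in> I \<Longrightarrow> j \<in> I \<Longrightarrow> i \<noteq> j \<Longrightarrow> 0 \<le> w i j + w j i"
  shows "(\<Sum>i\<in>I. \<Sum>j\<in>I. w i j * v j * v i)
    \<le> (\<Sum>i\<in>I. (v i)^2 * ((\<Sum>j\<in>I. w i j) + (\<Sum>j\<in>I. w j i))) / 2"
proof -
  define D where "D = (\<Sum>i\<in>I. \<Sum>j\<in>I. w i j * (v i - v j)^2)"
  have swap: "(\<Sum>i\<in>I. \<Sum>j\<in>I. w i j * (v j)^2) = (\<Sum>i\<in>I. (v i)^2 * (\<Sum>j\<in>I. w j i))"
    by (subst sum.swap) (simp add: sum_distrib_right mult.commute)
  have "D = (\<Sum>i\<in>I. (v i)^2 * ((\<Sum>j\<in>I. w i j) + (\<Sum>j\<in>I. w j i)))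
      - 2 * (\<Sum>i\<in>I. \<Sum>j\<in>I. w i j * v j * v i)"
    unfolding D_def power2_diff
    by (simp add: algebra_simps sum.distrib sum_subtractf sum_distrib_left sum_distrib_right swap)
  moreover have "0 \<le> D"
  proof -
    have "D = (\<Sum>i\<in>I. \<Sum>j\<in>I. w j i * (v i - v j)^2)"
      unfolding D_def by (subst sum.swap) (simp add: power2_commute)
    then have "2 * D = (\<Sum>i\<in>I. \<Sum>j\<in>I. (w i j + w j i) * (v i - v j)^2)"
      by (simp add: D_def algebra_simps sum.distrib)
    also have "\<dots> \<ge> 0"
    proof (intro sum_nonneg)
      fix i j
      assume "i \<in> I" "j \<in> I"
      then show "0 \<le> (w i j + w j i) * (v i - v j)^2"
        using assms(2) by (cases "i = j") simp_all
    qed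
    finally show ?thesis by simp
  qed
  ultimately show ?thesis
    by simp
qed

section \<open>Gruenwald weights\<close>

lemma gw_0 [simp]: "gw \<beta> 0 = 1"
  by (simp add: gw_def)

lemma gw_Suc: "gw \<beta> (Suc k) = gw \<beta> k * (real k - \<beta>) / (real k + 1)"
proof -
  have "\<beta> * (\<beta> gchoose k) = real k * (\<beta> gchoose k) + real (Suc k) * (\<beta> gchoose Suc k)"
    by (rule gbinomial_mult_1)
  then have gchoose_Suc: "\<beta> gchoose Suc k = (\<beta> gchoose k) * (\<beta> - real k) / (real k + 1)"
    by (simp add: field_simps)
  show ?thesis
    unfolding gw_def gchoose_Suc by (simp add: field_simps)
qed

lemma gw_1 [simp]: "gw \<beta> (Suc 0) = - \<beta>" "gw \<beta> 1 = - \<beta>"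
  using gw_Suc[of \<beta> 0] by simp_all

lemma gw_2: "gw \<beta> 2 = \<beta> * (\<beta> - 1) / 2"
  using gw_Suc[of \<beta> 1] by (simp add: numeral_2_eq_2 field_simps)

lemma sum_gw: "(\<Sum>k=0..n. gw \<beta> k) = gw (\<beta> - 1) n"
  using gbinomial_sum_lower_neg[of \<beta> n] by (simp add: gw_def atLeast0AtMost mult.commute)

lemma gw_pos:
  assumes "1 < \<beta>" "\<beta> < 2" "2 \<le> k"
  shows "0 < gw \<beta> k"
  using assms(3)
proof (induction k rule: dec_induct)
  case base
  show ?case using assms(1) by (simp add: gw_2)
next
  case (step n)
  then show ?case using assms(1,2) by (simp add: gw_Suc)
qed

lemma gw_neg:
  assumes "0 < \<alpha>" "\<alpha> < 1" "1 \<le> k"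
  shows "gw \<alpha> k < 0"
  using assms(3)
proof (induction k rule: dec_induct)
  case base
  show ?case using assms(1) by simp
next
  case (step n)
  then have "real n - \<alpha> > 0"
    using assms(2) by simp
  then show ?case
    using step.IH by (simp add: gw_Suc mult_neg_pos divide_neg_pos)
qed

lemma minus_gw_lower_bound_pred:
  assumes "0 < \<alpha>" "\<alpha> < 1" "2 \<le> n"
  shows "\<alpha> * (1 - \<alpha>) / 2 / (real n - 1) powr (1 + \<alpha>) \<le> - gw \<alpha> n"
  using assms(3)
proof (induction n rule: dec_induct)
  case base
  have "- gw \<alpha> 2 = \<alpha> * (1 - \<alpha>) / 2"
    by (simp add: gw_2 field_simps)
  then show ?case by simp
next
  case (step n)
  define c where "c = \<alpha> * (1 - \<alpha>) / 2"
  define r where "r = (real n - \<alpha>) / (real n + 1)"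
  have "c \<ge> 0" "r \<ge> 0" "1 \<le> real n - 1"
    using assms step.hyps by (auto simp: c_def r_def)
  have "1 / real n powr (1 + \<alpha>) \<le> r / (real n - 1) powr (1 + \<alpha>)"
    using pred_powr_le[OF assms(1,2) step.hyps(1)] \<open>1 \<le> real n - 1\<close>
    by (simp add: r_def divide_simps mult_ac)
  then have "c * (1 / real n powr (1 + \<alpha>)) \<le> c * (r / (real n - 1) powr (1 + \<alpha>))"
    using \<open>c \<ge> 0\<close> by (rule mult_left_mono)
  then have "c / real n powr (1 + \<alpha>) \<le> c / (real n - 1) powr (1 + \<alpha>) * r"
    by simp
  also have "\<dots> \<le> - gw \<alpha> n * r"
    unfolding c_def using step.IH \<open>r \<ge> 0\<close> by (rule mult_right_mono)
  also have "\<dots> = - gw \<alpha> (Suc n)"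
    by (simp add: gw_Suc r_def)
  finally show ?case by (simp add: c_def)
qed

lemma minus_gw_lower_bound:
  assumes "0 < \<alpha>" "\<alpha> < 1" "1 \<le> n"
  shows "\<alpha> * (1 - \<alpha>) / 2 / real n powr (1 + \<alpha>) \<le> - gw \<alpha> n"
proof (cases "n = 1")
  case True
  then show ?thesis
    using assms by (simp add: field_simps)
next
  case False
  then have "2 \<le> n"
    using assms(3) by simp
  have "(real n - 1) powr (1 + \<alpha>) \<le> real n powr (1 + \<alpha>)"
    using \<open>2 \<le> n\<close> assms(1) by (intro powr_mono2) auto
  then have "\<alpha> * (1 - \<alpha>) / 2 / real n powr (1 + \<alpha>) \<le> \<alpha> * (1 - \<alpha>) / 2 / (real n - 1) powr (1 + \<alpha>)"
    using assms \<open>2 \<le> n\<close> by (intro divide_left_mono) auto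
  also have "\<dots> \<le> - gw \<alpha> n"
    using minus_gw_lower_bound_pred[OF assms(1,2) \<open>2 \<le> n\<close>] .
  finally show ?thesis .
qed

section \<open>The weights \<open>\<omega>\<close>\<close>

text \<open>The weighted and shifted Gruenwald (WSGD) combination, with weights of arbitrary order \<open>\<alpha>\<close>:
  \<open>\<omega>\<close> corresponds to \<open>\<alpha> = \<beta>\<close> and its partial sums to \<open>\<alpha> = \<beta> - 1\<close>.\<close>

definition wsgd_comb :: "real \<Rightarrow> real \<Rightarrow> nat \<Rightarrow> real" where
  "wsgd_comb \<beta> \<alpha> n = lam1 \<beta> * gw \<alpha> (n + 2) + lam0 \<beta> * gw \<alpha> (n + 1) + lamm1 \<beta> * gw \<alpha> n"

definition wsgd_numer :: "real \<Rightarrow> real \<Rightarrow> nat \<Rightarrow> real" where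
  "wsgd_numer \<beta> \<alpha> n = lam1 \<beta> * (real n - \<alpha>) * (real n + 1 - \<alpha>)
     + lam0 \<beta> * (real n - \<alpha>) * (real n + 2) + lamm1 \<beta> * (real n + 1) * (real n + 2)"

lemma wsgd_comb_eq:
  "(real n + 1) * (real n + 2) * wsgd_comb \<beta> \<alpha> n = gw \<alpha> n * wsgd_numer \<beta> \<alpha> n"
proof -
  have r1: "(real n + 1) * gw \<alpha> (Suc n) = gw \<alpha> n * (real n - \<alpha>)"
    by (simp add: gw_Suc)
  have r2: "(real n + 2) * gw \<alpha> (Suc (Suc n)) = gw \<alpha> (Suc n) * (real n + 1 - \<alpha>)"
    using gw_Suc[of \<alpha> "Suc n"] by (simp add: add_ac)
  have "(real n + 1) * (real n + 2) * wsgd_comb \<beta> \<alpha> n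
      = lam1 \<beta> * (real n + 1) * ((real n + 2) * gw \<alpha> (Suc (Suc n)))
        + lam0 \<beta> * (real n + 2) * ((real n + 1) * gw \<alpha> (Suc n))
        + lamm1 \<beta> * (real n + 1) * (real n + 2) * gw \<alpha> n"
    by (simp add: wsgd_comb_def algebra_simps)
  also have "\<dots> = lam1 \<beta> * (real n + 1 - \<alpha>) * ((real n + 1) * gw \<alpha> (Suc n))
        + lam0 \<beta> * (real n + 2) * ((real n + 1) * gw \<alpha> (Suc n))
        + lamm1 \<beta> * (real n + 1) * (real n + 2) * gw \<alpha> n"
    unfolding r2 by (simp add: algebra_simps)
  also have "\<dots> = gw \<alpha> n * wsgd_numer \<beta> \<alpha> n"
    unfolding r1 wsgd_numer_def by (simp add: algebra_simps)
  finally show ?thesis .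
qed

lemma omega_add_2: "omega \<beta> (n + 2) = wsgd_comb \<beta> \<beta> n"
  by (simp add: omega_def wsgd_comb_def)

lemma sum_omega_eq: "(\<Sum>k=0..n+2. omega \<beta> k) = wsgd_comb \<beta> (\<beta> - 1) n"
proof (induction n)
  case 0
  show ?case
    by (simp add: wsgd_comb_def omega_def sum_gw[symmetric] numeral_2_eq_2 algebra_simps)
next
  case (Suc n)
  have "(\<Sum>k=0..Suc n + 2. omega \<beta> k) = wsgd_comb \<beta> (\<beta> - 1) n + omega \<beta> (n + 3)"
    using Suc.IH by (simp add: numeral_3_eq_3)
  also have "\<dots> = wsgd_comb \<beta> (\<beta> - 1) (Suc n)"
    by (simp add: wsgd_comb_def omega_def sum_gw[symmetric] numeral_3_eq_3 algebra_simps)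
  finally show ?case .
qed

lemma wsgd_numer_pred_0:
  "12 * wsgd_numer \<beta> (\<beta> - 1) 0 = (\<beta> - 1) * (\<beta> - 2) * (\<beta> + 3) * (\<beta> + 4)"
  by (simp add: wsgd_numer_def lam1_def lam0_def lamm1_def field_simps power2_eq_square)

lemma wsgd_numer_pred_lower_bound:
  assumes "1 < \<beta>" "\<beta> < 2"
  shows "\<exists>\<epsilon>>0. \<forall>n\<ge>1. \<epsilon> * ((real n + 1) * (real n + 2)) \<le> wsgd_numer \<beta> (\<beta> - 1) n"
proof -
  define A where "A = (2 - \<beta>) * (36 + \<beta> - 6 * \<beta>^2 - \<beta>^3)"
  define B where "B = 60 - 6 * \<beta>^2 - 12 * \<beta>"
  have "0 < A" "0 < B"
    using sq_cube_bounds[OF assms] assms by (simp_all add: A_def B_def)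
  define \<epsilon> where "\<epsilon> = min (A / 72) (min (B / 60) 1)"
  have "\<epsilon> * ((real n + 1) * (real n + 2)) \<le> wsgd_numer \<beta> (\<beta> - 1) n" if "1 \<le> n" for n
  proof -
    define t where "t = real n - 1"
    have "0 \<le> t"
      using that by (simp add: t_def)
    have numer: "12 * wsgd_numer \<beta> (\<beta> - 1) n = A + B * t + 12 * t^2"
      by (simp add: t_def A_def B_def wsgd_numer_def lam1_def lam0_def lamm1_def
          field_simps power2_eq_square power3_eq_cube)
    have denom: "12 * ((real n + 1) * (real n + 2)) = 72 + 60 * t + 12 * t^2"
      by (simp add: t_def algebra_simps power2_eq_square)
    have "\<epsilon> * 72 \<le> A" "\<epsilon> * 60 \<le> B" "\<epsilon> \<le> 1"
      by (simp_all add: \<epsilon>_def)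
    moreover have "\<epsilon> * 60 * t \<le> B * t"
      using \<open>\<epsilon> * 60 \<le> B\<close> \<open>0 \<le> t\<close> by (rule mult_right_mono)
    moreover have "\<epsilon> * (12 * t^2) \<le> 1 * (12 * t^2)"
      using \<open>\<epsilon> \<le> 1\<close> by (rule mult_right_mono) simp
    moreover have "12 * (\<epsilon> * ((real n + 1) * (real n + 2))) = \<epsilon> * 72 + \<epsilon> * 60 * t + \<epsilon> * (12 * t^2)"
      unfolding mult.left_commute[of 12 \<epsilon>] denom by (simp add: algebra_simps)
    ultimately show ?thesis
      using numer by linarith
  qed
  moreover have "0 < \<epsilon>"
    using \<open>0 < A\<close> \<open>0 < B\<close> by (simp add: \<epsilon>_def)
  ultimately show ?thesis
    by blast
qed

lemma wsgd_numer_nonneg: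
  assumes "1 < \<beta>" "\<beta> < 2" "2 \<le> n"
  shows "0 \<le> wsgd_numer \<beta> \<beta> n"
proof -
  define m where "m = real n - 2"
  have "0 \<le> m"
    using assms(3) by (simp add: m_def)
  have "0 \<le> 72 - 6 * \<beta>^2 - 18 * \<beta>"
    using sq_cube_bounds[OF assms(1,2)] assms by simp
  then have "0 \<le> (2 - \<beta>)^2 * (\<beta> + 5)^2 + m * (72 - 6 * \<beta>^2 - 18 * \<beta>) + 12 * m^2"
    using \<open>0 \<le> m\<close> by simp
  also have "\<dots> = 12 * wsgd_numer \<beta> \<beta> n"
    by (simp add: m_def wsgd_numer_def lam1_def lam0_def lamm1_def
        field_simps power2_eq_square power3_eq_cube)
  finally show ?thesis
    by simp
qed

lemma omega_1_nonpos:
  assumes "1 < \<beta>"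
  shows "omega \<beta> 1 \<le> 0"
proof -
  have "omega \<beta> 1 = - ((\<beta> + 2) * (\<beta> + 4) * (\<beta> - 1)) / 12"
    by (simp add: omega_def lam1_def lam0_def field_simps power2_eq_square)
  then show ?thesis
    using assms by simp
qed

lemma omega_0_add_omega_2_nonneg:
  assumes "1 < \<beta>" "\<beta> < 2"
  shows "0 \<le> omega \<beta> 0 + omega \<beta> 2"
proof -
  have "0 < \<beta>^3 + 7 * \<beta>^2 + 10 * \<beta> - 8"
    using sq_cube_bounds[OF assms] assms by linarith
  then have "0 \<le> (\<beta> - 1) * (\<beta>^3 + 7 * \<beta>^2 + 10 * \<beta> - 8) / 24"
    using assms by simp
  also have "\<dots> = omega \<beta> 0 + omega \<beta> 2"
    by (simp add: omega_def gw_2 lam1_def lam0_def lamm1_def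
        field_simps power2_eq_square power3_eq_cube)
  finally show ?thesis .
qed

lemma omega_nonneg:
  assumes "1 < \<beta>" "\<beta> < 2" "3 \<le> k"
  shows "0 \<le> omega \<beta> k"
proof (cases "k = 3")
  case True
  have "omega \<beta> 3 = lam1 \<beta> * gw \<beta> 3 + lam0 \<beta> * gw \<beta> 2 + lamm1 \<beta> * gw \<beta> 1"
    by (simp add: omega_def)
  moreover have "0 \<le> lam1 \<beta> * gw \<beta> 3" "0 \<le> lam0 \<beta> * gw \<beta> 2" "0 \<le> lamm1 \<beta> * gw \<beta> 1"
  proof -
    have "lamm1 \<beta> = (\<beta> - 1) * (\<beta> - 2) / 12"
      by (simp add: lamm1_def algebra_simps power2_eq_square)
    moreover have "(\<beta> - 1) * (\<beta> - 2) < 0"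
      using assms by (simp add: mult_pos_neg)
    ultimately have "lamm1 \<beta> \<le> 0"
      by simp
    then show "0 \<le> lamm1 \<beta> * gw \<beta> 1"
      using assms(1) by (simp add: mult_nonpos_nonneg)
    have "0 \<le> lam1 \<beta>" "0 \<le> lam0 \<beta>"
      using sq_cube_bounds[OF assms(1,2)] assms by (simp_all add: lam1_def lam0_def)
    then show "0 \<le> lam1 \<beta> * gw \<beta> 3" "0 \<le> lam0 \<beta> * gw \<beta> 2"
      using gw_pos[OF assms(1,2), of 3] gw_pos[OF assms(1,2), of 2] by simp_all
  qed
  ultimately show ?thesis
    using True by simp
next
  case False
  define n where "n = k - 2"
  have k: "k = n + 2" and "2 \<le> n"
    using assms(3) False by (simp_all add: n_def)
  have "0 \<le> gw \<beta> n * wsgd_numer \<beta> \<beta> n"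
    using gw_pos[OF assms(1,2) \<open>2 \<le> n\<close>] wsgd_numer_nonneg[OF assms(1,2) \<open>2 \<le> n\<close>] by simp
  then have "0 \<le> (real n + 1) * (real n + 2) * omega \<beta> k"
    by (simp only: k omega_add_2 wsgd_comb_eq)
  moreover have "0 < (real n + 1) * (real n + 2)"
    by simp
  ultimately show ?thesis
    by (simp add: zero_le_mult_iff)
qed

lemma sum_omega_le_gw_pred:
  assumes "1 < \<beta>" "\<beta> < 2" "1 \<le> n"
    and "\<epsilon> * ((real n + 1) * (real n + 2)) \<le> wsgd_numer \<beta> (\<beta> - 1) n"
  shows "(\<Sum>k=0..n+2. omega \<beta> k) \<le> \<epsilon> * gw (\<beta> - 1) n"
proof -
  have "gw (\<beta> - 1) n * wsgd_numer \<beta> (\<beta> - 1) n \<le> gw (\<beta> - 1) n * (\<epsilon> * ((real n + 1) * (real n + 2)))"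
    using assms gw_neg[of "\<beta> - 1" n] by (intro mult_left_mono_neg) simp_all
  then have "(real n + 1) * (real n + 2) * (\<Sum>k=0..n+2. omega \<beta> k)
      \<le> (real n + 1) * (real n + 2) * (\<epsilon> * gw (\<beta> - 1) n)"
    unfolding sum_omega_eq wsgd_comb_eq by (simp add: mult_ac)
  then show ?thesis
    by (simp add: mult_le_cancel_left_pos)
qed

lemma sum_omega_upper_bound:
  assumes "1 < \<beta>" "\<beta> < 2"
  shows "\<exists>\<kappa>>0. \<forall>m\<ge>2. (\<Sum>k=0..m. omega \<beta> k) \<le> - \<kappa> / real m powr \<beta>"
proof -
  obtain \<epsilon> where "0 < \<epsilon>"
    and \<epsilon>: "\<And>n. 1 \<le> n \<Longrightarrow> \<epsilon> * ((real n + 1) * (real n + 2)) \<le> wsgd_numer \<beta> (\<beta> - 1) n"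
    using wsgd_numer_pred_lower_bound[OF assms] by blast
  define g where "g = (\<beta> - 1) * (2 - \<beta>) / 2"
  define \<kappa> where "\<kappa> = min (- wsgd_numer \<beta> (\<beta> - 1) 0 / 2) (\<epsilon> * g)"
  have "(\<beta> - 1) * (\<beta> - 2) * (\<beta> + 3) * (\<beta> + 4) < 0"
    using assms by (intro mult_neg_pos mult_pos_neg) simp_all
  then have "wsgd_numer \<beta> (\<beta> - 1) 0 < 0"
    using wsgd_numer_pred_0[of \<beta>] by simp
  moreover have "0 < g"
    using assms by (simp add: g_def)
  ultimately have "0 < \<kappa>"
    using \<open>0 < \<epsilon>\<close> by (simp add: \<kappa>_def)
  have "(\<Sum>k=0..n+2. omega \<beta> k) \<le> - \<kappa> / real (n + 2) powr \<beta>" for n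
  proof (cases "n = 0")
    case True
    have "1 \<le> real (n + 2) powr \<beta>"
      using assms(1) by (simp add: ge_one_powr_ge_zero)
    then have "- \<kappa> \<le> - \<kappa> / real (n + 2) powr \<beta>"
      using \<open>0 < \<kappa>\<close> by (simp add: divide_le_eq)
    moreover have "(\<Sum>k=0..n+2. omega \<beta> k) = wsgd_numer \<beta> (\<beta> - 1) 0 / 2"
      using sum_omega_eq[of \<beta> 0] wsgd_comb_eq[of 0 \<beta> "\<beta> - 1"] True by simp
    ultimately show ?thesis
      by (simp add: \<kappa>_def)
  next
    case False
    then have "(\<Sum>k=0..n+2. omega \<beta> k) \<le> \<epsilon> * gw (\<beta> - 1) n"
      using sum_omega_le_gw_pred[OF assms _ \<epsilon>] by simp
    also have "\<dots> \<le> \<epsilon> * - (g / real n powr \<beta>)"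
      using minus_gw_lower_bound[of "\<beta> - 1" n] assms False \<open>0 < \<epsilon>\<close>
      by (intro mult_left_mono) (simp_all add: g_def algebra_simps)
    also have "\<dots> \<le> - \<kappa> / real n powr \<beta>"
      by (simp add: \<kappa>_def divide_right_mono)
    also have "\<dots> \<le> - \<kappa> / real (n + 2) powr \<beta>"
      using \<open>0 < \<kappa>\<close> False assms(1) by (simp add: frac_le powr_mono2)
    finally show ?thesis .
  qed
  then have "(\<Sum>k=0..m. omega \<beta> k) \<le> - \<kappa> / real m powr \<beta>" if "2 \<le> m" for m
    using that by (metis le_add_diff_inverse2)
  then show ?thesis
    using \<open>0 < \<kappa>\<close> by blast
qed

section \<open>The matrix of the fractional part\<close>

definition omega_matrix :: "real \<Rightarrow> nat \<Rightarrow> nat \<Rightarrow> real" where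
  "omega_matrix \<beta> i j = (if j \<le> i + 1 then omega \<beta> (i + 1 - j) else 0)"

lemma omega_matrix_sym_part_nonneg:
  assumes "1 < \<beta>" "\<beta> < 2" "i \<noteq> j"
  shows "0 \<le> omega_matrix \<beta> i j + omega_matrix \<beta> j i"
proof -
  have *: "0 \<le> omega_matrix \<beta> i j + omega_matrix \<beta> j i" if "i < j" for i j
  proof (cases "j = i + 1")
    case True
    then show ?thesis
      using omega_0_add_omega_2_nonneg[OF assms(1,2)] by (simp add: omega_matrix_def)
  next
    case False
    then show ?thesis
      using that omega_nonneg[OF assms(1,2), of "j + 1 - i"] by (simp add: omega_matrix_def)
  qed
  show ?thesis
    using assms(3) *[of i j] *[of j i] by (cases "i < j") (simp_all add: add.commute)
qed

text \<open>The truncated subtractions in the bounds vanish except for the last row (resp. the first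
  column), where the sum starts at \<open>k = 1\<close>.\<close>

lemma omega_matrix_row_sum:
  assumes "1 \<le> i" "i < N"
  shows "(\<Sum>j=1..N-1. omega_matrix \<beta> i j) = (\<Sum>k=i+2-N..i. omega \<beta> k)"
proof -
  have "(\<Sum>j=1..N-1. omega_matrix \<beta> i j) = (\<Sum>j=1..min (i + 1) (N - 1). omega \<beta> (i + 1 - j))"
    by (intro sum.mono_neutral_cong_right) (auto simp: omega_matrix_def)
  also have "\<dots> = (\<Sum>k=i+2-N..i. omega \<beta> k)"
    using assms by (intro sum.reindex_bij_witness[where i="\<lambda>k. i + 1 - k" and j="\<lambda>j. i + 1 - j"]) auto
  finally show ?thesis .
qed

lemma omega_matrix_col_sum:
  assumes "1 \<le> i" "i < N"
  shows "(\<Sum>j=1..N-1. omega_matrix \<beta> j i) = (\<Sum>k=2-i..N-i. omega \<beta> k)"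
proof -
  have "(\<Sum>j=1..N-1. omega_matrix \<beta> j i) = (\<Sum>j=max 1 (i - 1)..N-1. omega \<beta> (j + 1 - i))"
    by (intro sum.mono_neutral_cong_right) (auto simp: omega_matrix_def)
  also have "\<dots> = (\<Sum>k=2-i..N-i. omega \<beta> k)"
    using assms by (intro sum.reindex_bij_witness[where i="\<lambda>k. k + i - 1" and j="\<lambda>j. j + 1 - i"]) auto
  finally show ?thesis .
qed

lemma omega_matrix_row_col_sum_le:
  assumes "1 < \<beta>" "\<beta> < 2" "0 \<le> \<kappa>"
    and partial_sums: "\<And>m. 2 \<le> m \<Longrightarrow> (\<Sum>k=0..m. omega \<beta> k) \<le> - \<kappa> / real m powr \<beta>"
    and "3 \<le> N" "1 \<le> i" "i < N"
  shows "(\<Sum>j=1..N-1. omega_matrix \<beta> i j) + (\<Sum>j=1..N-1. omega_matrix \<beta> j i) \<le> - \<kappa> / real N powr \<beta>"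
proof -
  have Q: "(\<Sum>k=0..m. omega \<beta> k) \<le> - \<kappa> / real N powr \<beta>" if "2 \<le> m" "m \<le> N" for m
  proof -
    have "\<kappa> / real N powr \<beta> \<le> \<kappa> / real m powr \<beta>"
      using that assms(1,3) by (intro divide_left_mono powr_mono2) auto
    then show ?thesis
      using partial_sums[OF that(1)] by linarith
  qed
  have split: "(\<Sum>k=0..m. omega \<beta> k) = omega \<beta> 0 + (\<Sum>k=1..m. omega \<beta> k)" for m
    by (simp add: sum.atLeast_Suc_atMost)
  have "(\<Sum>k=0..N-1. omega \<beta> k) \<le> - \<kappa> / real N powr \<beta>"
    by (rule Q) (use assms(5) in auto)
  then have boundary: "omega \<beta> 0 + omega \<beta> 1 + (\<Sum>k=1..N-1. omega \<beta> k) \<le> - \<kappa> / real N powr \<beta>"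
    using omega_1_nonpos[OF assms(1)] split[of "N - 1"] by simp
  consider "i = 1 \<or> i = N - 1" | "2 \<le> i" "i + 2 \<le> N"
    using assms(5-7) by linarith
  then show ?thesis
  proof cases
    case 1
    then show ?thesis
      using omega_matrix_row_sum[OF assms(6,7)] omega_matrix_col_sum[OF assms(6,7)]
        boundary assms(5) by (auto simp: numeral_2_eq_2)
  next
    case 2
    moreover have "0 \<le> \<kappa> / real N powr \<beta>"
      using assms(3) by simp
    moreover have "2 \<le> N - i"
      using 2 by linarith
    ultimately show ?thesis
      using omega_matrix_row_sum[OF assms(6,7)] omega_matrix_col_sum[OF assms(6,7)]
        Q[of i] Q[of "N - i"] by simp
  qed
qed

lemma omega_matrix_form_le:
  assumes "1 < \<beta>" "\<beta> < 2" "0 \<le> \<kappa>"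
    and "\<And>m. 2 \<le> m \<Longrightarrow> (\<Sum>k=0..m. omega \<beta> k) \<le> - \<kappa> / real m powr \<beta>"
    and "3 \<le> N"
  shows "(\<Sum>i=1..N-1. \<Sum>j=1..N-1. omega_matrix \<beta> i j * v j * v i)
    \<le> - \<kappa> / (2 * real N powr \<beta>) * (\<Sum>i=1..N-1. (v i)^2)"
proof -
  let ?I = "{1..N-1}"
  have "(\<Sum>i\<in>?I. \<Sum>j\<in>?I. omega_matrix \<beta> i j * v j * v i)
      \<le> (\<Sum>i\<in>?I. (v i)^2 * ((\<Sum>j\<in>?I. omega_matrix \<beta> i j) + (\<Sum>j\<in>?I. omega_matrix \<beta> j i))) / 2"
    by (rule quadratic_form_le_row_col_sums) (use omega_matrix_sym_part_nonneg[OF assms(1,2)] in auto)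
  also have "\<dots> \<le> (\<Sum>i\<in>?I. (v i)^2 * (- \<kappa> / real N powr \<beta>)) / 2"
    using omega_matrix_row_col_sum_le[OF assms] by (intro divide_right_mono sum_mono mult_left_mono) auto
  also have "\<dots> = - \<kappa> / (2 * real N powr \<beta>) * (\<Sum>i\<in>?I. (v i)^2)"
    by (simp add: sum_distrib_left sum_divide_distrib mult.commute)
  finally show ?thesis .
qed

section \<open>The energy estimate\<close>

lemma sum_omega_left_eq_matrix_row:
  assumes "v 0 = 0" "v N = 0" "1 \<le> i" "i < N"
  shows "(\<Sum>k=0..i+1. omega \<beta> k * v (i + 1 - k)) = (\<Sum>j=1..N-1. omega_matrix \<beta> i j * v j)"
proof -
  have "(\<Sum>k=0..i+1. omega \<beta> k * v (i + 1 - k)) = (\<Sum>j=0..i+1. omega \<beta> (i + 1 - j) * v j)"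
    by (subst sum.atLeastAtMost_rev) (intro sum.cong, auto)
  also have "\<dots> = (\<Sum>j=0..N. omega_matrix \<beta> i j * v j)"
    using assms by (intro sum.mono_neutral_cong_left) (auto simp: omega_matrix_def)
  also have "\<dots> = (\<Sum>j=1..N-1. omega_matrix \<beta> i j * v j)"
    using assms(1,2) by (rule sum_interior)
  finally show ?thesis .
qed

lemma sum_omega_right_eq_matrix_col:
  assumes "v 0 = 0" "v N = 0" "1 \<le> i" "i < N"
  shows "(\<Sum>k=0..N-i+1. omega \<beta> k * v (i + k - 1)) = (\<Sum>j=1..N-1. omega_matrix \<beta> j i * v j)"
proof -
  have "(\<Sum>k=0..N-i+1. omega \<beta> k * v (i + k - 1)) = (\<Sum>j=i-1..N. omega \<beta> (j + 1 - i) * v j)"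
    using assms(3,4) by (intro sum.reindex_bij_witness[where i="\<lambda>j. j + 1 - i" and j="\<lambda>k. i + k - 1"]) auto
  also have "\<dots> = (\<Sum>j=0..N. omega_matrix \<beta> j i * v j)"
    using assms by (intro sum.mono_neutral_cong_left) (auto simp: omega_matrix_def)
  also have "\<dots> = (\<Sum>j=1..N-1. omega_matrix \<beta> j i * v j)"
    using assms(1,2) by (rule sum_interior)
  finally show ?thesis .
qed

lemma grid_ip_delta_h_eq:
  assumes "in_Vh N v"
  shows "grid_ip a b N (delta_h \<beta> \<gamma> Dp Dm a b N v) v
    = (Dp + Dm) * mesh a b N / mesh a b N powr \<beta>
      * (\<Sum>i=1..N-1. \<Sum>j=1..N-1. omega_matrix \<beta> i j * v j * v i)"
proof -
  let ?I = "{1..N-1}" and ?h = "mesh a b N"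
  define W where "W = (\<Sum>i\<in>?I. \<Sum>j\<in>?I. omega_matrix \<beta> i j * v j * v i)"
  have v: "v 0 = 0" "v N = 0"
    using assms by (auto simp: in_Vh_def)
  have "delta_h \<beta> \<gamma> Dp Dm a b N v i * v i
      = \<gamma> / (2 * ?h) * ((v (i + 1) - v (i - 1)) * v i)
        + Dp / ?h powr \<beta> * (\<Sum>j\<in>?I. omega_matrix \<beta> i j * v j * v i)
        + Dm / ?h powr \<beta> * (\<Sum>j\<in>?I. omega_matrix \<beta> j i * v j * v i)" if "i \<in> ?I" for i
  proof -
    have "1 \<le> i" "i < N"
      using that by auto
    then show ?thesis
      unfolding delta_h_def Let_def sum_omega_left_eq_matrix_row[OF v \<open>1 \<le> i\<close> \<open>i < N\<close>]
        sum_omega_right_eq_matrix_col[OF v \<open>1 \<le> i\<close> \<open>i < N\<close>]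
      by (simp add: algebra_simps sum_distrib_left diff_divide_distrib add_divide_distrib)
  qed
  then have "(\<Sum>i\<in>?I. delta_h \<beta> \<gamma> Dp Dm a b N v i * v i)
      = \<gamma> / (2 * ?h) * (\<Sum>i\<in>?I. (v (i + 1) - v (i - 1)) * v i)
        + Dp / ?h powr \<beta> * W
        + Dm / ?h powr \<beta> * (\<Sum>i\<in>?I. \<Sum>j\<in>?I. omega_matrix \<beta> j i * v j * v i)"
    by (simp add: W_def sum.distrib sum_distrib_left)
  also have "(\<Sum>i\<in>?I. \<Sum>j\<in>?I. omega_matrix \<beta> j i * v j * v i) = W"
    unfolding W_def by (subst sum.swap) (simp add: mult_ac)
  also have "(\<Sum>i\<in>?I. (v (i + 1) - v (i - 1)) * v i) = 0"
    using sum_central_difference_eq_0[OF v] .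
  finally show ?thesis
    unfolding grid_ip_def W_def by (simp add: algebra_simps add_divide_distrib)
qed

lemma power2_grid_norm:
  assumes "a \<le> b"
  shows "(grid_norm a b N v)^2 = mesh a b N * (\<Sum>i=1..N-1. (v i)^2)"
proof -
  have "0 \<le> mesh a b N * (\<Sum>i=1..N-1. (v i)^2)"
    using assms by (intro mult_nonneg_nonneg sum_nonneg) (auto simp: mesh_def)
  then show ?thesis
    by (simp add: grid_norm_def grid_ip_def power2_eq_square)
qed

lemma mesh_powr_mult:
  assumes "a < b" "0 < N"
  shows "mesh a b N powr \<beta> * real N powr \<beta> = (b - a) powr \<beta>"
  using assms by (simp add: mesh_def powr_mult[symmetric])

lemma grid_ip_delta_h_le:
  assumes "1 < \<beta>" "\<beta> < 2" "a < b" "0 \<le> Dp" "0 \<le> Dm" "0 \<le> \<kappa>"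
    and partial_sums: "\<And>m. 2 \<le> m \<Longrightarrow> (\<Sum>k=0..m. omega \<beta> k) \<le> - \<kappa> / real m powr \<beta>"
    and "3 \<le> N" "in_Vh N v"
  shows "grid_ip a b N (delta_h \<beta> \<gamma> Dp Dm a b N v) v
    \<le> - ((Dp + Dm) * \<kappa> / (2 * (b - a) powr \<beta>)) * (grid_norm a b N v)^2"
proof -
  let ?h = "mesh a b N" and ?S = "\<Sum>i=1..N-1. (v i)^2"
  have "0 < ?h"
    using assms(3,8) by (simp add: mesh_def)
  have "grid_ip a b N (delta_h \<beta> \<gamma> Dp Dm a b N v) v
      = (Dp + Dm) * ?h / ?h powr \<beta> * (\<Sum>i=1..N-1. \<Sum>j=1..N-1. omega_matrix \<beta> i j * v j * v i)"
    using grid_ip_delta_h_eq[OF assms(9)] .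
  also have "\<dots> \<le> (Dp + Dm) * ?h / ?h powr \<beta> * (- \<kappa> / (2 * real N powr \<beta>) * ?S)"
    using omega_matrix_form_le[OF assms(1,2,6) partial_sums assms(8)] \<open>0 < ?h\<close> assms(4,5)
    by (intro mult_left_mono) auto
  also have "\<dots> = - ((Dp + Dm) * \<kappa> / (2 * (?h powr \<beta> * real N powr \<beta>))) * (?h * ?S)"
    by (simp add: field_simps)
  also have "\<dots> = - ((Dp + Dm) * \<kappa> / (2 * (b - a) powr \<beta>)) * (grid_norm a b N v)^2"
    using assms(3,8) by (simp add: mesh_powr_mult power2_grid_norm)
  finally show ?thesis .
qed

theorem theorem1:
  fixes \<beta> a b \<gamma> Dp Dm :: real
  assumes "1 < \<beta>" "\<beta> < 2" "a < b" "Dp \<ge> 0" "Dm \<ge> 0" "Dp + Dm > 0"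
  shows "\<exists>c > 0. \<forall>N \<ge> 5. \<forall>v. in_Vh N v \<longrightarrow>
           grid_ip a b N (delta_h \<beta> \<gamma> Dp Dm a b N v) v \<le> - c * ln 2 * (grid_norm a b N v)^2"
proof -
  obtain \<kappa> where "0 < \<kappa>"
    and partial_sums: "\<And>m. 2 \<le> m \<Longrightarrow> (\<Sum>k=0..m. omega \<beta> k) \<le> - \<kappa> / real m powr \<beta>"
    using sum_omega_upper_bound[OF assms(1,2)] by blast
  define c where "c = (Dp + Dm) * \<kappa> / (2 * (b - a) powr \<beta> * ln 2)"
  have "0 < c"
    using assms(3,6) \<open>0 < \<kappa>\<close> by (simp add: c_def)
  moreover have "grid_ip a b N (delta_h \<beta> \<gamma> Dp Dm a b N v) v \<le> - c * ln 2 * (grid_norm a b N v)^2"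
    if "5 \<le> N" "in_Vh N v" for N v
  proof -
    have "- c * ln 2 = - ((Dp + Dm) * \<kappa> / (2 * (b - a) powr \<beta>))"
      by (simp add: c_def)
    then show ?thesis
      using grid_ip_delta_h_le[OF assms(1-5) _ partial_sums _ that(2)] \<open>0 < \<kappa>\<close> that(1) by simp
  qed
  ultimately show ?thesis
    by blast
qed

end
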